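(* Consider cyclically non-backtracking walks of length $2k$ on the complete bipartite graph $K_{n,m}$ such that in the subgraph spanned by the walk, all vertices from $V_1$ have degree at most $d_1$ and all vertices from $V_2$ have degree at most $d_2$. Then the number of such walks with given parameters $\chi_1,\chi_2,f_1,f_2$ satisfying $\chi=\chi_1+\chi_2\geq1$ is at most $$(2k)^{3(\chi_1+\chi_2)+2}(d_1-1)^{f_2}(d_2-1)^{f_1}n^{k-\chi_1-f_1}m^{k-\chi_2-f_2}.$$ Moreover, for every such walk, $|f_1-f_2|\leq\chi+1$.
   Context: $K_{n,m}$ has vertex classes $V_1=[n]$, $V_2=[m]$. A cyclically non-backtracking walk of length $2k$ is a walk $(w_0,w_1,\dots,w_{2k})$ with $w_{2k}=w_0\in V_1$, written $(u_1,v_1,\dots,u_k,v_k,u_{k+1})$ with $u_i\in V_1$, $v_i\in V_2$, such that $u_{i+1}\neq u_i$ ($1\leq i\leq k$), $v_{i+1}\neq v_i$ ($1\leq i\leq k-1$), and $(u_1,v_1,u_2)\neq(u_{k+1},v_k,u_k)$. For $1\leq i\leq 2k$, step $i$ is free if $w_i$ did not previously occur in the walk; a coincidence if $w_i$ previously occurred but the edge $w_{i-1}w_i$ did not; forced if the edge $w_{i-1}w_i$ previously occurred. Let $\chi_1+1$ and $\chi_2$ be the numbers of coincidence steps ending at a vertex of $V_1$ and of $V_2$ respectively (so there are $\chi+1$ coincidences, $\chi=\chi_1+\chi_2$), and $f_1,f_2$ the numbers of forced steps ending at a vertex of $V_1$ and of $V_2$ respectively. *)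

theory Defs
  imports Complex_Main
begin

text \<open>Vertices of K_{n,m}: Inl u with u in {1..n} (class V1), Inr v with v in {1..m} (class V2).
A walk of length 2k is a list w = [w_0, ..., w_2k]; u_i = w!(2(i-1)), v_i = w!(2i-1).\<close>

definition cnb_walk :: "nat \<Rightarrow> nat \<Rightarrow> nat \<Rightarrow> (nat + nat) list \<Rightarrow> bool" where
  "cnb_walk n m k w \<longleftrightarrow>
     1 \<le> k \<and> length w = 2*k + 1 \<and>
     (\<forall>i\<le>k. \<exists>u\<in>{1..n}. w!(2*i) = Inl u) \<and>
     (\<forall>i<k. \<exists>v\<in>{1..m}. w!(2*i+1) = Inr v) \<and>
     w!(2*k) = w!0 \<and>
     (\<forall>i\<in>{1..k}. w!(2*i) \<noteq> w!(2*i-2)) \<and>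
     (\<forall>i\<in>{1..k-1}. w!(2*i+1) \<noteq> w!(2*i-1)) \<and>
     (w!0, w!1, w!2) \<noteq> (w!(2*k), w!(2*k-1), w!(2*k-2))"

definition edges_before :: "(nat + nat) list \<Rightarrow> nat \<Rightarrow> (nat + nat) set set" where
  "edges_before w i = {{w!(j-1), w!j} | j. 1 \<le> j \<and> j < i}"

definition walk_edges :: "(nat + nat) list \<Rightarrow> (nat + nat) set set" where
  "walk_edges w = edges_before w (length w)"

definition walk_deg :: "(nat + nat) list \<Rightarrow> (nat + nat) \<Rightarrow> nat" where
  "walk_deg w x = card {y. {x, y} \<in> walk_edges w}"

definition free_step :: "(nat + nat) list \<Rightarrow> nat \<Rightarrow> bool" where
  "free_step w i \<longleftrightarrow> w!i \<notin> set (take i w)"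

definition coinc_step :: "(nat + nat) list \<Rightarrow> nat \<Rightarrow> bool" where
  "coinc_step w i \<longleftrightarrow> w!i \<in> set (take i w) \<and> {w!(i-1), w!i} \<notin> edges_before w i"

definition forced_step :: "(nat + nat) list \<Rightarrow> nat \<Rightarrow> bool" where
  "forced_step w i \<longleftrightarrow> {w!(i-1), w!i} \<in> edges_before w i"

definition steps :: "(nat + nat) list \<Rightarrow> nat set" where
  "steps w = {1..length w - 1}"

definition chi1 :: "(nat + nat) list \<Rightarrow> int" where
  "chi1 w = int (card {i\<in>steps w. coinc_step w i \<and> isl (w!i)}) - 1"

definition chi2 :: "(nat + nat) list \<Rightarrow> nat" where
  "chi2 w = card {i\<in>steps w. coinc_step w i \<and> \<not> isl (w!i)}"

definition f1 :: "(nat + nat) list \<Rightarrow> nat" where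
  "f1 w = card {i\<in>steps w. forced_step w i \<and> isl (w!i)}"

definition f2 :: "(nat + nat) list \<Rightarrow> nat" where
  "f2 w = card {i\<in>steps w. forced_step w i \<and> \<not> isl (w!i)}"

definition deg_bounded :: "nat \<Rightarrow> nat \<Rightarrow> (nat + nat) list \<Rightarrow> bool" where
  "deg_bounded d1 d2 w \<longleftrightarrow>
     (\<forall>x\<in>set w. (isl x \<longrightarrow> walk_deg w x \<le> d1) \<and> (\<not> isl x \<longrightarrow> walk_deg w x \<le> d2))"

end

(*
  Classify each step of a walk as free, coincidence or forced, and count the walks with a
  prescribed sequence of step kinds vertex by vertex: a free step has at most n resp. m
  choices, a coincidence at most 2k (it revisits an earlier vertex), and a forced step at
  most d - 1 (it reuses an edge at the current vertex, but by non-backtracking not the edge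
  just traversed).

  Non-backtracking also forbids a forced step right after a free one, so every maximal run
  of forced steps starts right after a coincidence. A kind sequence is therefore determined
  by its chi + 1 coincidences together with the ends of those runs that end before the last
  step; since the last step is not free, there are at most chi such ends, and there are at
  most (2k)^(chi+1) (2k)^chi kind sequences. Within a run of forced steps the walk alternates
  between V1 and V2, so each run changes f1 - f2 by at most one: |f1 - f2| <= chi + 1.
*)

theory Submission
  imports Defs
begin

lemma card_filter_atMost_0: "card {i\<in>{..0::nat}. P i} = (if P 0 then 1 else 0)"
proof -
  have "{i\<in>{..0::nat}. P i} = (if P 0 then {0} else {})" by auto
  then show ?thesis by simp
qed

lemma card_filter_atMost_Suc:
  "card {i\<in>{..Suc j}. P i} = card {i\<in>{..j}. P i} + (if P (Suc j) then 1 else 0)"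
proof -
  have "{i\<in>{..Suc j}. P i} = (if P (Suc j) then insert (Suc j) {i\<in>{..j}. P i} else {i\<in>{..j}. P i})"
    by (auto simp: le_Suc_eq)
  then show ?thesis by simp
qed

lemma card_parity_atMost:
  fixes k :: nat
  shows "card {i\<in>{..2 * k}. even i} = Suc k" "card {i\<in>{..2 * k}. odd i} = k"
proof (induction k)
  case 0
  have "{i\<in>{..2 * 0 :: nat}. even i} = {0}" "{i\<in>{..2 * 0 :: nat}. odd i} = {}"
    by (auto simp: odd_pos)
  then show "card {i\<in>{..2 * 0 :: nat}. even i} = Suc 0" "card {i\<in>{..2 * 0 :: nat}. odd i} = 0"
    by simp_all
next
  case (Suc k)
  have double_Suc: "2 * Suc k = Suc (Suc (2 * k))" by simp
  show "card {i\<in>{..2 * Suc k}. even i} = Suc (Suc k)" "card {i\<in>{..2 * Suc k}. odd i} = Suc k"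
    using Suc.IH unfolding double_Suc card_filter_atMost_Suc by simp_all
qed

lemma card_subsets_card_le:
  assumes "finite A"
  shows "card {E. E \<subseteq> A \<and> card E \<le> j} \<le> (card A + 1) ^ j"
proof (induction j)
  case 0
  have "{E. E \<subseteq> A \<and> card E \<le> 0} = {{}}"
    using assms by (auto dest: finite_subset)
  then show ?case by simp
next
  case (Suc j)
  let ?F = "\<lambda>j. {E. E \<subseteq> A \<and> card E \<le> j}"
  have fin: "finite (?F j)"
    using assms by (auto intro: finite_subset[of _ "Pow A"])
  have "?F (Suc j) \<subseteq> insert {} (\<Union>x\<in>A. insert x ` ?F j)"
  proof
    fix E assume E: "E \<in> ?F (Suc j)"
    show "E \<in> insert {} (\<Union>x\<in>A. insert x ` ?F j)"
    proof (cases "E = {}")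
      case False
      then obtain x where "x \<in> E" by blast
      then have "E = insert x (E - {x})" "E - {x} \<in> ?F j" "x \<in> A"
        using E finite_subset[OF _ assms] by auto
      then show ?thesis by blast
    qed simp
  qed
  then have "card (?F (Suc j)) \<le> card (insert {} (\<Union>x\<in>A. insert x ` ?F j))"
    using assms fin by (intro card_mono) auto
  also have "\<dots> \<le> Suc (card (\<Union>x\<in>A. insert x ` ?F j))"
    by (rule card_insert_le_m1) simp_all
  also have "card (\<Union>x\<in>A. insert x ` ?F j) \<le> (\<Sum>x\<in>A. card (insert x ` ?F j))"
    using assms by (rule card_UN_le)
  also have "\<dots> \<le> (\<Sum>x\<in>A. (card A + 1) ^ j)"
    by (intro sum_mono le_trans[OF card_image_le[OF fin] Suc.IH])
  also have "Suc \<dots> \<le> (card A + 1) ^ Suc j"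
  proof -
    have "1 \<le> (card A + 1) ^ j" by simp
    then show ?thesis by simp
  qed
  finally show ?case by simp
qed

lemma card_le_card_image_mult:
  assumes "finite S" and "\<And>y. y \<in> f ` S \<Longrightarrow> card {x\<in>S. f x = y} \<le> B"
  shows "card S \<le> card (f ` S) * B"
proof -
  have "card S = card (\<Union>y\<in>f ` S. {x\<in>S. f x = y})"
    by (rule arg_cong[where f = card]) blast
  also have "\<dots> \<le> (\<Sum>y\<in>f ` S. card {x\<in>S. f x = y})"
    using assms(1) by (intro card_UN_le) simp
  also have "\<dots> \<le> card (f ` S) * B"
    using sum_bounded_above[of "f ` S" "\<lambda>y. card {x\<in>S. f x = y}" B] assms(2) by simp
  finally show ?thesis .
qed

lemma card_le_prod_branching:
  assumes "finite W" and len: "\<And>w. w \<in> W \<Longrightarrow> length w = L"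
    and branch: "\<And>i p. i < L \<Longrightarrow> card ((\<lambda>w. w ! i) ` {w\<in>W. take i w = p}) \<le> b i"
  shows "card W \<le> (\<Prod>i<L. b i)"
proof -
  have "card (take j ` W) \<le> (\<Prod>i<j. b i)" if "j \<le> L" for j
    using that
  proof (induction j)
    case 0
    have "card (take 0 ` W) \<le> card {[] :: 'a list}"
      by (intro card_mono) auto
    then show ?case by simp
  next
    case (Suc j)
    let ?next = "\<lambda>p. (\<lambda>w. w ! j) ` {w\<in>W. take j w = p}"
    have "take (Suc j) ` W \<subseteq> (\<Union>p\<in>take j ` W. (\<lambda>x. p @ [x]) ` ?next p)"
    proof
      fix q assume "q \<in> take (Suc j) ` W"
      then obtain w where "w \<in> W" "q = take (Suc j) w" by blast
      moreover have "j < length w" using len[OF \<open>w \<in> W\<close>] Suc.prems by simp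
      ultimately show "q \<in> (\<Union>p\<in>take j ` W. (\<lambda>x. p @ [x]) ` ?next p)"
        by (auto simp: take_Suc_conv_app_nth)
    qed
    then have "card (take (Suc j) ` W) \<le> card (\<Union>p\<in>take j ` W. (\<lambda>x. p @ [x]) ` ?next p)"
      using assms(1) by (intro card_mono) auto
    also have "\<dots> \<le> (\<Sum>p\<in>take j ` W. card ((\<lambda>x. p @ [x]) ` ?next p))"
      using assms(1) by (intro card_UN_le) simp
    also have "\<dots> = (\<Sum>p\<in>take j ` W. card (?next p))"
      by (intro sum.cong refl card_image) (simp add: inj_on_def)
    also have "\<dots> \<le> (\<Sum>p\<in>take j ` W. b j)"
      using branch[of j] Suc.prems by (intro sum_mono) simp
    also have "\<dots> \<le> (\<Prod>i<Suc j. b i)"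
      using Suc by simp
    finally show ?case .
  qed
  moreover have "take L ` W = W"
    using len by force
  ultimately show ?thesis by fastforce
qed

section \<open>Sequences of step kinds\<close>

text \<open>\<open>T i\<close> is the kind of step \<open>i\<close> of a walk, step 0 standing for the choice of the
  starting vertex. Under \<open>led_by_coinc\<close> every maximal run of forced steps starts right
  after a coincidence.\<close>

datatype kind = Free | Coinc | Forced

definition led_by_coinc :: "nat \<Rightarrow> (nat \<Rightarrow> kind) \<Rightarrow> bool" where
  "led_by_coinc N T \<longleftrightarrow> T 0 = Free \<and> (\<forall>i<N. T i = Free \<longrightarrow> T (Suc i) \<noteq> Forced)"

definition coincs :: "nat \<Rightarrow> (nat \<Rightarrow> kind) \<Rightarrow> nat set" where
  "coincs N T = {i\<in>{..N}. T i = Coinc}"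

definition run_ends :: "nat \<Rightarrow> (nat \<Rightarrow> kind) \<Rightarrow> nat set" where
  "run_ends N T = {i\<in>{..<N}. T i = Forced \<and> T (Suc i) \<noteq> Forced}"

lemma card_filter_kinds_split:
  assumes "finite I"
  shows "card {i\<in>I. P i} =
    card {i\<in>I. T i = Free \<and> P i} + card {i\<in>I. T i = Coinc \<and> P i} + card {i\<in>I. T i = Forced \<and> P i}"
proof -
  let ?A = "{i\<in>I. T i = Free \<and> P i}" and ?B = "{i\<in>I. T i = Coinc \<and> P i}"
    and ?C = "{i\<in>I. T i = Forced \<and> P i}"
  have "{i\<in>I. P i} = ?A \<union> ?B \<union> ?C"
  proof (rule set_eqI)
    show "i \<in> {i\<in>I. P i} \<longleftrightarrow> i \<in> ?A \<union> ?B \<union> ?C" for i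
      by (cases "T i") simp_all
  qed
  moreover have "card (?A \<union> ?B \<union> ?C) = card (?A \<union> ?B) + card ?C"
    using assms by (intro card_Un_disjoint) auto
  moreover have "card (?A \<union> ?B) = card ?A + card ?B"
    using assms by (intro card_Un_disjoint) auto
  ultimately show ?thesis by simp
qed

lemma forced_parity_balance:
  assumes "led_by_coinc N T"
  shows "\<bar>int (card {i\<in>{..N}. T i = Forced \<and> even i}) - int (card {i\<in>{..N}. T i = Forced \<and> odd i})\<bar>
    \<le> int (card (coincs N T))"
proof -
  define D where
    "D j = int (card {i\<in>{..j}. T i = Forced \<and> even i}) - int (card {i\<in>{..j}. T i = Forced \<and> odd i})"
    for j
  define K where "K j = int (card (coincs j T))" for j
  \<comment> \<open>Along a run of forced steps \<open>D\<close> alternates between its value \<open>x\<close> at the leading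
    coincidence and \<open>x + (-1) ^ j\<close>, where \<open>\<bar>x\<bar> < K j\<close>.\<close>
  have "\<bar>D j\<bar> \<le> K j \<and> (T j \<noteq> Free \<longrightarrow> \<bar>D j\<bar> < K j \<or> \<bar>D j - (-1) ^ j\<bar> < K j)" if "j \<le> N" for j
    using that
  proof (induction j)
    case 0
    then show ?case
      using assms unfolding D_def K_def coincs_def card_filter_atMost_0 by (simp add: led_by_coinc_def)
  next
    case (Suc j)
    have D: "D (Suc j) = D j + (if T (Suc j) = Forced then (-1) ^ Suc j else 0)"
      unfolding D_def card_filter_atMost_Suc by simp
    have K: "K (Suc j) = K j + (if T (Suc j) = Coinc then 1 else 0)"
      unfolding K_def coincs_def card_filter_atMost_Suc by simp
    have "T j \<noteq> Free" if "T (Suc j) = Forced"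
      using assms Suc.prems that by (auto simp: led_by_coinc_def)
    moreover have "(-1::int) ^ j = 1 \<or> (-1::int) ^ j = -1"
      by (simp add: minus_one_power_iff)
    ultimately show ?case
      using Suc D K by (cases "T (Suc j)") auto
  qed
  from this[of N] show ?thesis by (simp add: D_def K_def)
qed

lemma card_run_ends_less_card_coincs:
  assumes "led_by_coinc N T" and "T N \<noteq> Free"
  shows "card (run_ends N T) < card (coincs N T)"
proof -
  have "card (run_ends j T) + (if T j \<noteq> Free then 1 else 0) \<le> card (coincs j T)" if "j \<le> N" for j
    using that
  proof (induction j)
    case 0
    then show ?case using assms by (simp add: run_ends_def coincs_def led_by_coinc_def)
  next
    case (Suc j)
    have "run_ends (Suc j) T =
        (if T j = Forced \<and> T (Suc j) \<noteq> Forced then insert j (run_ends j T) else run_ends j T)"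
      by (auto simp: run_ends_def less_Suc_eq)
    then have "card (run_ends (Suc j) T) =
        card (run_ends j T) + (if T j = Forced \<and> T (Suc j) \<noteq> Forced then 1 else 0)"
      by (simp add: run_ends_def)
    moreover have "card (coincs (Suc j) T) = card (coincs j T) + (if T (Suc j) = Coinc then 1 else 0)"
      unfolding coincs_def card_filter_atMost_Suc by simp
    moreover have "T j \<noteq> Free" if "T (Suc j) = Forced"
      using assms Suc.prems that by (auto simp: led_by_coinc_def)
    ultimately show ?case
      using Suc by (cases "T (Suc j)") auto
  qed
  from this[of N] assms(2) show ?thesis by simp
qed

lemma led_by_coinc_eqI:
  assumes T: "led_by_coinc N T" "T N \<noteq> Free" and T': "led_by_coinc N T'" "T' N \<noteq> Free"
    and coincs: "coincs N T = coincs N T'" and run_ends: "run_ends N T = run_ends N T'"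
    and "i \<le> N"
  shows "T i = T' i"
proof -
  have kind_cases: "x = Free \<or> x = Coinc \<or> x = Forced" for x
    by (cases x) simp_all
  have coinc_iff: "T j = Coinc \<longleftrightarrow> T' j = Coinc" if "j \<le> N" for j
  proof -
    have "j \<in> coincs N T \<longleftrightarrow> j \<in> coincs N T'" using coincs by simp
    then show ?thesis using that by (simp add: coincs_def)
  qed
  from \<open>i \<le> N\<close> show ?thesis
  proof (induction i rule: inc_induct)
    case base
    show ?case using T(2) T'(2) coinc_iff[of N] kind_cases[of "T N"] kind_cases[of "T' N"] by auto
  next
    case (step j)
    have end_iff: "T j = Forced \<and> T (Suc j) \<noteq> Forced \<longleftrightarrow> T' j = Forced \<and> T' (Suc j) \<noteq> Forced"
    proof -
      have "j \<in> run_ends N T \<longleftrightarrow> j \<in> run_ends N T'" using run_ends by simp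
      then show ?thesis using step.hyps by (simp add: run_ends_def)
    qed
    have "T j \<noteq> Free \<and> T' j \<noteq> Free" if "T (Suc j) = Forced"
      using T(1) T'(1) step.hyps step.IH that by (auto simp: led_by_coinc_def)
    then show ?case
      using coinc_iff[of j] end_iff step.hyps step.IH kind_cases[of "T j"] kind_cases[of "T' j"]
      by auto
  qed
qed

lemma inj_on_coincs_run_ends:
  assumes led: "\<And>T. T \<in> TT \<Longrightarrow> led_by_coinc N T"
    and last: "\<And>T. T \<in> TT \<Longrightarrow> T N \<noteq> Free"
    and beyond: "\<And>T i. T \<in> TT \<Longrightarrow> N < i \<Longrightarrow> T i = Free"
  shows "inj_on (\<lambda>T. (coincs N T, run_ends N T)) TT"
proof (rule inj_onI, rule ext)
  fix T T' i
  assume TT: "T \<in> TT" "T' \<in> TT" and eq: "(coincs N T, run_ends N T) = (coincs N T', run_ends N T')"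
  show "T i = T' i"
  proof (cases "i \<le> N")
    case True
    with eq show ?thesis
      by (intro led_by_coinc_eqI[OF led[OF TT(1)] last[OF TT(1)] led[OF TT(2)] last[OF TT(2)]])
        simp_all
  qed (simp add: beyond TT)
qed

lemma card_kind_seqs_le:
  assumes "0 < N"
    and led: "\<And>T. T \<in> TT \<Longrightarrow> led_by_coinc N T"
    and last: "\<And>T. T \<in> TT \<Longrightarrow> T N \<noteq> Free"
    and card_coincs: "\<And>T. T \<in> TT \<Longrightarrow> card (coincs N T) = c"
    and beyond: "\<And>T i. T \<in> TT \<Longrightarrow> N < i \<Longrightarrow> T i = Free"
  shows "card TT \<le> N ^ c * N ^ (c - 1)"
proof -
  let ?code = "\<lambda>T. (coincs N T, run_ends N T)"
  let ?Cs = "{C. C \<subseteq> {1..N} \<and> card C = c}" and ?Es = "{E. E \<subseteq> {1..<N} \<and> card E \<le> c - 1}"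
  have "inj_on ?code TT"
    using led last beyond by (rule inj_on_coincs_run_ends)
  moreover have "?code ` TT \<subseteq> ?Cs \<times> ?Es"
  proof
    fix p assume "p \<in> ?code ` TT"
    then obtain T where T: "T \<in> TT" and p: "p = ?code T" by blast
    have "0 < i" if "T i \<noteq> Free" for i
      using led[OF T] that by (cases i) (simp_all add: led_by_coinc_def)
    then have "coincs N T \<subseteq> {1..N}" "run_ends N T \<subseteq> {1..<N}"
      by (auto simp: coincs_def run_ends_def Suc_le_eq)
    then show "p \<in> ?Cs \<times> ?Es"
      using card_run_ends_less_card_coincs[OF led[OF T] last[OF T]] card_coincs[OF T] p
      by simp
  qed
  moreover have "finite (?Cs \<times> ?Es)"
    by (intro finite_cartesian_product finite_Collect_conjI disjI1 finite_Collect_subsets) simp_all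
  ultimately have "card TT \<le> card (?Cs \<times> ?Es)"
    by (rule card_inj_on_le)
  also have "\<dots> = (N choose c) * card ?Es"
    using n_subsets[of "{1..N}" c] by (simp add: card_cartesian_product)
  also have "\<dots> \<le> N ^ c * N ^ (c - 1)"
  proof (rule mult_le_mono)
    show "N choose c \<le> N ^ c"
      by (cases "c \<le> N") (simp_all add: binomial_le_pow binomial_eq_0 not_le)
    show "card ?Es \<le> N ^ (c - 1)"
      using card_subsets_card_le[of "{1..<N}" "c - 1"] \<open>0 < N\<close> by simp
  qed
  finally show ?thesis .
qed

section \<open>Cyclically non-backtracking walks\<close>

lemma cnb_walk_length: "cnb_walk n m k w \<Longrightarrow> length w = Suc (2 * k)"
  by (simp add: cnb_walk_def)

lemma cnb_walk_nth:
  assumes "cnb_walk n m k w" and "i \<le> 2 * k"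
  shows "w ! i \<in> (if even i then Inl ` {1..n} else Inr ` {1..m})"
proof (cases "even i")
  case True
  then obtain j where "i = 2 * j" "j \<le> k" using assms(2) by auto
  then show ?thesis using assms(1) True unfolding cnb_walk_def by force
next
  case False
  then obtain j where "i = 2 * j + 1" "j < k" using assms(2) by (auto elim!: oddE)
  then show ?thesis using assms(1) False unfolding cnb_walk_def by force
qed

lemma cnb_walk_isl_nth: "cnb_walk n m k w \<Longrightarrow> i \<le> 2 * k \<Longrightarrow> isl (w ! i) \<longleftrightarrow> even i"
  using cnb_walk_nth[of n m k w i] by (auto split: if_splits)

lemma cnb_walk_non_backtracking:
  assumes "cnb_walk n m k w" and "0 < i" "i < 2 * k"
  shows "w ! Suc i \<noteq> w ! (i - 1)"
proof (cases "even i")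
  case True
  then obtain j where "i = 2 * j" "j \<in> {1..k - 1}" using assms(2,3) by auto
  then show ?thesis using assms(1) unfolding cnb_walk_def by auto
next
  case False
  then obtain j where j: "i = 2 * j + 1" "Suc j \<in> {1..k}" using assms(3) by (auto elim!: oddE)
  then have "w ! (2 * Suc j) \<noteq> w ! (2 * Suc j - 2)"
    using assms(1) unfolding cnb_walk_def by blast
  then show ?thesis using j(1) by simp
qed

lemma finite_cnb_walks: "finite {w. cnb_walk n m k w}"
proof (rule finite_subset)
  show "{w. cnb_walk n m k w} \<subseteq> {w. set w \<subseteq> Inl ` {1..n} \<union> Inr ` {1..m} \<and> length w = Suc (2 * k)}"
  proof
    fix w assume w: "w \<in> {w. cnb_walk n m k w}"
    have "w ! i \<in> Inl ` {1..n} \<union> Inr ` {1..m}" if "i < length w" for i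
      using w cnb_walk_nth[of n m k w i] that by (auto simp: cnb_walk_length split: if_splits)
    then have "set w \<subseteq> Inl ` {1..n} \<union> Inr ` {1..m}"
      by (metis in_set_conv_nth subsetI)
    with w show "w \<in> {w. set w \<subseteq> Inl ` {1..n} \<union> Inr ` {1..m} \<and> length w = Suc (2 * k)}"
      by (simp add: cnb_walk_length)
  qed
  show "finite {w. set w \<subseteq> Inl ` {1..n} \<union> Inr ` {1..m} \<and> length w = Suc (2 * k)}"
    by (rule finite_lists_length_eq) simp
qed

lemma nth_mem_take: "j < i \<Longrightarrow> j < length w \<Longrightarrow> w ! j \<in> set (take i w)"
  by (metis length_take min_less_iff_conj nth_mem nth_take)

lemma edges_before_eq_image: "edges_before w i = (\<lambda>j. {w ! (j - 1), w ! j}) ` {1..<i}"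
  by (auto simp: edges_before_def)

lemma edges_before_mono: "i \<le> i' \<Longrightarrow> edges_before w i \<subseteq> edges_before w i'"
  by (auto simp: edges_before_def)

lemma edges_before_cong:
  assumes "take i w = take i w'" and "i \<le> length w" "i \<le> length w'"
  shows "edges_before w i = edges_before w' i"
proof -
  have "w ! j = w' ! j" if "j < i" for j
    using assms that by (metis nth_take)
  then show ?thesis
    unfolding edges_before_eq_image by (intro image_cong) auto
qed

lemma finite_neighbours: "finite {y. {x, y} \<in> edges_before w i}"
proof (rule finite_subset)
  show "{y. {x, y} \<in> edges_before w i} \<subseteq> \<Union>(edges_before w i)" by auto
  show "finite (\<Union>(edges_before w i))" by (simp add: edges_before_eq_image)
qed

lemma card_neighbours_le_walk_deg:
  assumes "i \<le> length w"
  shows "card {y. {x, y} \<in> edges_before w i} \<le> walk_deg w x"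
  unfolding walk_deg_def walk_edges_def
  using edges_before_mono[OF assms] by (intro card_mono finite_neighbours) auto

definition step_kind :: "(nat + nat) list \<Rightarrow> nat \<Rightarrow> kind" where
  "step_kind w i = (if forced_step w i then Forced else if free_step w i then Free else Coinc)"

definition kinds :: "nat \<Rightarrow> (nat + nat) list \<Rightarrow> nat \<Rightarrow> kind" where
  "kinds k w i = (if i \<in> {1..2 * k} then step_kind w i else Free)"

lemma kinds_Forced_iff: "kinds k w i = Forced \<longleftrightarrow> i \<in> {1..2 * k} \<and> forced_step w i"
  by (auto simp: kinds_def step_kind_def)

lemma kinds_Coinc_iff: "kinds k w i = Coinc \<longleftrightarrow> i \<in> {1..2 * k} \<and> coinc_step w i"
  by (auto simp: kinds_def step_kind_def coinc_step_def free_step_def forced_step_def)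

lemma kinds_Free_imp_free_step: "kinds k w i = Free \<Longrightarrow> i \<in> {1..2 * k} \<Longrightarrow> free_step w i"
  by (auto simp: kinds_def step_kind_def split: if_splits)

lemma kinds_led_by_coinc:
  assumes w: "cnb_walk n m k w"
  shows "led_by_coinc (2 * k) (kinds k w)"
  unfolding led_by_coinc_def
proof (intro conjI allI impI notI)
  show "kinds k w 0 = Free" by (simp add: kinds_def)
  fix h assume h: "h < 2 * k" and new: "kinds k w h = Free" and "kinds k w (Suc h) = Forced"
  then obtain j where j: "1 \<le> j" "j < Suc h" "{w ! h, w ! Suc h} = {w ! (j - 1), w ! j}"
    by (auto simp: kinds_Forced_iff forced_step_def edges_before_def)
  then have "0 < h" by simp
  have len: "length w = Suc (2 * k)" using w by (rule cnb_walk_length)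
  have new: "w ! h \<notin> set (take h w)"
    using new \<open>0 < h\<close> h by (auto dest: kinds_Free_imp_free_step simp: free_step_def)
  show False
  proof (cases "j < h")
    case True
    then have "w ! (j - 1) \<in> set (take h w)" "w ! j \<in> set (take h w)"
      using len h by (auto intro: nth_mem_take)
    moreover have "w ! h \<in> {w ! (j - 1), w ! j}" using j(3) by blast
    ultimately show False using new by auto
  next
    case False
    then have "j = h" using j by simp
    moreover have "w ! (h - 1) \<in> set (take h w)"
      using \<open>0 < h\<close> len h by (intro nth_mem_take) auto
    then have "w ! (h - 1) \<noteq> w ! h"
      using new by auto
    ultimately have "w ! Suc h = w ! (h - 1)"
      using j(3) by (auto simp: doubleton_eq_iff)
    moreover have "w ! Suc h \<noteq> w ! (h - 1)"
      using cnb_walk_non_backtracking[OF w] \<open>0 < h\<close> h by simp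
    ultimately show False by simp
  qed
qed

lemma kinds_last_not_Free:
  assumes w: "cnb_walk n m k w"
  shows "kinds k w (2 * k) \<noteq> Free"
proof
  have "1 \<le> k" "w ! (2 * k) = w ! 0" using w by (simp_all add: cnb_walk_def)
  moreover have "w ! 0 \<in> set (take (2 * k) w)"
    using \<open>1 \<le> k\<close> cnb_walk_length[OF w] by (intro nth_mem_take) simp_all
  moreover assume "kinds k w (2 * k) = Free"
  ultimately show False
    using kinds_Free_imp_free_step[of k w "2 * k"] by (simp add: free_step_def)
qed

lemma kinds_filter_eq:
  assumes w: "cnb_walk n m k w"
  shows "{i\<in>{..2 * k}. kinds k w i = Coinc \<and> even i} = {i\<in>steps w. coinc_step w i \<and> isl (w ! i)}"
    and "{i\<in>{..2 * k}. kinds k w i = Coinc \<and> odd i} = {i\<in>steps w. coinc_step w i \<and> \<not> isl (w ! i)}"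
    and "{i\<in>{..2 * k}. kinds k w i = Forced \<and> even i} = {i\<in>steps w. forced_step w i \<and> isl (w ! i)}"
    and "{i\<in>{..2 * k}. kinds k w i = Forced \<and> odd i} = {i\<in>steps w. forced_step w i \<and> \<not> isl (w ! i)}"
  using cnb_walk_isl_nth[OF w] cnb_walk_length[OF w]
  by (auto simp: steps_def kinds_Coinc_iff kinds_Forced_iff)

lemma card_kinds:
  assumes w: "cnb_walk n m k w"
  shows "int (card {i\<in>{..2 * k}. kinds k w i = Coinc}) = chi1 w + int (chi2 w) + 1"
    and "card {i\<in>{..2 * k}. kinds k w i = Forced \<and> even i} = f1 w"
    and "card {i\<in>{..2 * k}. kinds k w i = Forced \<and> odd i} = f2 w"
    and "int (card {i\<in>{..2 * k}. kinds k w i = Free \<and> even i}) = int k - chi1 w - int (f1 w)"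
    and "int (card {i\<in>{..2 * k}. kinds k w i = Free \<and> odd i}) = int k - int (chi2 w) - int (f2 w)"
proof -
  have coinc_even: "int (card {i\<in>{..2 * k}. kinds k w i = Coinc \<and> even i}) = chi1 w + 1"
    and coinc_odd: "card {i\<in>{..2 * k}. kinds k w i = Coinc \<and> odd i} = chi2 w"
    using kinds_filter_eq[OF w] by (simp_all add: chi1_def chi2_def)
  show forced: "card {i\<in>{..2 * k}. kinds k w i = Forced \<and> even i} = f1 w"
    "card {i\<in>{..2 * k}. kinds k w i = Forced \<and> odd i} = f2 w"
    using kinds_filter_eq[OF w] by (simp_all add: f1_def f2_def)
  have "card {i\<in>{..2 * k}. kinds k w i = Coinc} =
      card ({i\<in>{..2 * k}. kinds k w i = Coinc \<and> even i} \<union> {i\<in>{..2 * k}. kinds k w i = Coinc \<and> odd i})"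
    by (rule arg_cong[where f = card]) auto
  also have "\<dots> =
      card {i\<in>{..2 * k}. kinds k w i = Coinc \<and> even i} + card {i\<in>{..2 * k}. kinds k w i = Coinc \<and> odd i}"
    by (rule card_Un_disjoint) auto
  finally show "int (card {i\<in>{..2 * k}. kinds k w i = Coinc}) = chi1 w + int (chi2 w) + 1"
    using coinc_even coinc_odd by simp
  show "int (card {i\<in>{..2 * k}. kinds k w i = Free \<and> even i}) = int k - chi1 w - int (f1 w)"
    using card_filter_kinds_split[of "{..2 * k}" even "kinds k w"] card_parity_atMost(1)[of k]
      coinc_even forced by simp
  show "int (card {i\<in>{..2 * k}. kinds k w i = Free \<and> odd i}) = int k - int (chi2 w) - int (f2 w)"
    using card_filter_kinds_split[of "{..2 * k}" odd "kinds k w"] card_parity_atMost(2)[of k]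
      coinc_odd forced by simp
qed

lemma coincs_kinds: "coincs (2 * k) (kinds k w) = {i\<in>{..2 * k}. kinds k w i = Coinc}"
  by (simp add: coincs_def)

lemma chi1_plus_chi2_nonneg:
  assumes w: "cnb_walk n m k w"
  shows "0 \<le> chi1 w + int (chi2 w)"
proof -
  have "0 < card (coincs (2 * k) (kinds k w))"
    using card_run_ends_less_card_coincs[OF kinds_led_by_coinc[OF w] kinds_last_not_Free[OF w]]
    by simp
  then show ?thesis
    using card_kinds(1)[OF w] by (simp add: coincs_kinds)
qed

lemma abs_f1_minus_f2_le:
  assumes w: "cnb_walk n m k w"
  shows "\<bar>int (f1 w) - int (f2 w)\<bar> \<le> chi1 w + int (chi2 w) + 1"
  using forced_parity_balance[OF kinds_led_by_coinc[OF w]] card_kinds[OF w]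
  by (simp add: coincs_kinds)

section \<open>Counting walks\<close>

definition choices :: "nat \<Rightarrow> nat \<Rightarrow> nat \<Rightarrow> nat \<Rightarrow> nat \<Rightarrow> kind \<Rightarrow> nat \<Rightarrow> nat" where
  "choices n m k d1 d2 \<kappa> i = (case \<kappa> of
      Free \<Rightarrow> if even i then n else m
    | Coinc \<Rightarrow> 2 * k
    | Forced \<Rightarrow> (if even i then d2 else d1) - 1)"

lemma card_next_vertices_forced_le:
  assumes S: "\<And>w. w \<in> S \<Longrightarrow>
      cnb_walk n m k w \<and> deg_bounded d1 d2 w \<and> take i w = p \<and> forced_step w i"
    and "i \<le> 2 * k"
  shows "card ((\<lambda>w. w ! i) ` S) \<le> (if even i then d2 else d1) - 1"
proof (cases "S = {}")
  case False
  then obtain w0 where w0: "w0 \<in> S" by blast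
  have len: "length w = Suc (2 * k)" if "w \<in> S" for w
    using S[OF that] cnb_walk_length by blast
  obtain h where h: "i = Suc h" "0 < h"
    using S[OF w0] by (cases i) (auto simp: forced_step_def edges_before_def)
  have same_prefix: "edges_before w i = edges_before w0 i \<and> w ! h = w0 ! h \<and> w ! (h - 1) = w0 ! (h - 1)"
    if "w \<in> S" for w
  proof -
    have "take i w = take i w0" using S[OF that] S[OF w0] by simp
    moreover have "w ! j = take i w ! j" "w0 ! j = take i w0 ! j" if "j \<le> h" for j
      using h that by simp_all
    ultimately show ?thesis
      using edges_before_cong[of i w w0] len[OF that] len[OF w0] \<open>i \<le> 2 * k\<close> by simp
  qed
  define A where "A = {y. {w0 ! h, y} \<in> edges_before w0 i}"
  have "(\<lambda>w. w ! i) ` S \<subseteq> A - {w0 ! (h - 1)}"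
  proof safe
    fix w assume "w \<in> S"
    then show "w ! i \<in> A"
      using S same_prefix h by (auto simp: A_def forced_step_def)
    assume "w ! i = w0 ! (h - 1)"
    then show False
      using cnb_walk_non_backtracking[of n m k w h] S[OF \<open>w \<in> S\<close>] same_prefix[OF \<open>w \<in> S\<close>]
        h \<open>i \<le> 2 * k\<close> by simp
  qed
  moreover have "w0 ! (h - 1) \<in> A"
    using h by (auto simp: A_def edges_before_def insert_commute intro!: exI[of _ h])
  moreover have "finite A"
    unfolding A_def by (rule finite_neighbours)
  ultimately have "card ((\<lambda>w. w ! i) ` S) \<le> card A - 1"
    by (metis card_Diff_singleton card_mono finite_Diff)
  moreover have "card A \<le> walk_deg w0 (w0 ! h)"
    unfolding A_def using len[OF w0] \<open>i \<le> 2 * k\<close> by (intro card_neighbours_le_walk_deg) simp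
  moreover have "walk_deg w0 (w0 ! h) \<le> (if even i then d2 else d1)"
    using S[OF w0] cnb_walk_isl_nth[of n m k w0 h] len[OF w0] h \<open>i \<le> 2 * k\<close>
    by (auto simp: deg_bounded_def)
  ultimately show ?thesis by linarith
qed simp

lemma card_walks_with_kinds_le:
  "card {w. cnb_walk n m k w \<and> deg_bounded d1 d2 w \<and> kinds k w = T}
     \<le> (\<Prod>i\<le>2 * k. choices n m k d1 d2 (T i) i)"
proof -
  let ?W = "{w. cnb_walk n m k w \<and> deg_bounded d1 d2 w \<and> kinds k w = T}"
  have "card ?W \<le> (\<Prod>i<Suc (2 * k). choices n m k d1 d2 (T i) i)"
  proof (rule card_le_prod_branching)
    show "finite ?W"
      using finite_cnb_walks by (rule finite_subset[rotated]) auto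
    show "length w = Suc (2 * k)" if "w \<in> ?W" for w
      using that cnb_walk_length by blast
  next
    fix i p assume "i < Suc (2 * k)"
    then have i: "i \<le> 2 * k" by simp
    let ?S = "{w \<in> ?W. take i w = p}"
    show "card ((\<lambda>w. w ! i) ` ?S) \<le> choices n m k d1 d2 (T i) i"
    proof (cases "T i")
      case Free
      let ?V = "if even i then Inl ` {1..n} else Inr ` {1..m} :: (nat + nat) set"
      have "card ((\<lambda>w. w ! i) ` ?S) \<le> card ?V"
        using cnb_walk_nth[of n m k _ i] i by (intro card_mono) auto
      also have "\<dots> = (if even i then n else m)"
        by (simp add: card_image)
      finally show ?thesis using Free by (simp add: choices_def)
    next
      case Coinc
      have "(\<lambda>w. w ! i) ` ?S \<subseteq> set (take i p)"
        using Coinc by (auto simp: kinds_Coinc_iff coinc_step_def)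
      then have "card ((\<lambda>w. w ! i) ` ?S) \<le> card (set (take i p))"
        by (intro card_mono) auto
      also have "\<dots> \<le> 2 * k"
        using card_length[of "take i p"] i by simp
      finally show ?thesis using Coinc by (simp add: choices_def)
    next
      case Forced
      then have "card ((\<lambda>w. w ! i) ` ?S) \<le> (if even i then d2 else d1) - 1"
        using i by (intro card_next_vertices_forced_le[where p = p]) (auto simp: kinds_Forced_iff)
      then show ?thesis using Forced by (simp add: choices_def)
    qed
  qed
  then show ?thesis by (simp add: lessThan_Suc_atMost)
qed

lemma prod_choices:
  assumes "finite I"
  shows "(\<Prod>i\<in>I. choices n m k d1 d2 (T i) i) =
    n ^ card {i\<in>I. T i = Free \<and> even i} * m ^ card {i\<in>I. T i = Free \<and> odd i}
    * (2 * k) ^ card {i\<in>I. T i = Coinc}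
    * (d2 - 1) ^ card {i\<in>I. T i = Forced \<and> even i} * (d1 - 1) ^ card {i\<in>I. T i = Forced \<and> odd i}"
proof -
  have "choices n m k d1 d2 (T i) i =
      (if T i = Free \<and> even i then n else 1) * (if T i = Free \<and> odd i then m else 1)
      * (if T i = Coinc then 2 * k else 1)
      * (if T i = Forced \<and> even i then d2 - 1 else 1) * (if T i = Forced \<and> odd i then d1 - 1 else 1)"
    for i
    by (cases "T i") (simp_all add: choices_def)
  then show ?thesis
    using assms by (simp only: prod.distrib prod.inter_filter[symmetric] prod_constant power_mult_distrib)
qed

lemma prod_choices_kinds:
  assumes w: "cnb_walk n m k w"
  shows "(\<Prod>i\<le>2 * k. choices n m k d1 d2 (kinds k w i) i) =
    n ^ nat (int k - chi1 w - int (f1 w)) * m ^ nat (int k - int (chi2 w) - int (f2 w))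
    * (2 * k) ^ nat (chi1 w + int (chi2 w) + 1) * (d2 - 1) ^ f1 w * (d1 - 1) ^ f2 w"
  unfolding prod_choices[OF finite_atMost] card_kinds(2,3)[OF w]
    card_kinds(1,4,5)[OF w, symmetric] nat_int ..

lemma card_kinds_image_le:
  assumes "0 < k"
    and walks: "\<And>w. w \<in> S \<Longrightarrow> cnb_walk n m k w"
    and coincidences: "\<And>w. w \<in> S \<Longrightarrow> chi1 w + int (chi2 w) + 1 = int c"
  shows "card (kinds k ` S) \<le> (2 * k) ^ c * (2 * k) ^ (c - 1)"
proof (rule card_kind_seqs_le)
  show "0 < 2 * k" using \<open>0 < k\<close> by simp
  fix T assume "T \<in> kinds k ` S"
  then obtain w where w: "w \<in> S" and T: "T = kinds k w" by blast
  show "led_by_coinc (2 * k) T" using kinds_led_by_coinc[OF walks[OF w]] T by simp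
  show "T (2 * k) \<noteq> Free" using kinds_last_not_Free[OF walks[OF w]] T by simp
  show "card (coincs (2 * k) T) = c"
    using card_kinds(1)[OF walks[OF w]] coincidences[OF w] T by (simp add: coincs_kinds)
  show "T i = Free" if "2 * k < i" for i using that T by (simp add: kinds_def)
qed

lemma card_walks_with_params_le_nat:
  fixes n m k d1 d2 g1 g2 c2 :: nat and c1 :: int
  defines "S \<equiv> {w. cnb_walk n m k w \<and> deg_bounded d1 d2 w \<and>
    chi1 w = c1 \<and> chi2 w = c2 \<and> f1 w = g1 \<and> f2 w = g2}"
    and "c \<equiv> nat (c1 + int c2 + 1)"
  shows "card S \<le> (2 * k) ^ c * (2 * k) ^ (c - 1)
    * (n ^ nat (int k - c1 - int g1) * m ^ nat (int k - int c2 - int g2)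
       * (2 * k) ^ c * (d2 - 1) ^ g1 * (d1 - 1) ^ g2)"
    (is "_ \<le> ?kinds_bound * ?walks_bound")
proof (cases "S = {}")
  case False
  then have "0 < k" by (auto simp: S_def cnb_walk_def)
  have "finite S"
    unfolding S_def using finite_cnb_walks by (rule finite_subset[rotated]) auto
  moreover have "card {w\<in>S. kinds k w = T} \<le> ?walks_bound" if "T \<in> kinds k ` S" for T
  proof -
    obtain w where w: "w \<in> S" "T = kinds k w" using \<open>T \<in> kinds k ` S\<close> by blast
    have "card {w\<in>S. kinds k w = T} \<le> card {w. cnb_walk n m k w \<and> deg_bounded d1 d2 w \<and> kinds k w = T}"
      using finite_cnb_walks by (intro card_mono) (auto simp: S_def intro: finite_subset[rotated])
    also have "\<dots> \<le> (\<Prod>i\<le>2 * k. choices n m k d1 d2 (T i) i)"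
      by (rule card_walks_with_kinds_le)
    also have "\<dots> = ?walks_bound"
      using w prod_choices_kinds[of n m k w d1 d2] by (simp add: S_def c_def)
    finally show ?thesis .
  qed
  ultimately have "card S \<le> card (kinds k ` S) * ?walks_bound"
    by (rule card_le_card_image_mult)
  moreover have "card (kinds k ` S) \<le> ?kinds_bound"
    using \<open>0 < k\<close> by (rule card_kinds_image_le) (auto simp: S_def c_def chi1_def)
  ultimately show ?thesis
    by (meson le_trans mult_le_mono1)
qed simp

lemma card_walks_with_params_le:
  fixes n m k d1 d2 g1 g2 c2 :: nat and c1 :: int
  shows "real (card {w. cnb_walk n m k w \<and> deg_bounded d1 d2 w \<and>
                      chi1 w = c1 \<and> chi2 w = c2 \<and> f1 w = g1 \<and> f2 w = g2})
    \<le> (2 * real k) powi (3 * (c1 + int c2) + 2) * real (d1 - 1) ^ g2 * real (d2 - 1) ^ g1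
      * real n powi (int k - c1 - int g1) * real m powi (int k - int c2 - int g2)"
    (is "real (card ?S) \<le> _")
proof (cases "?S = {}")
  case False
  then obtain w where w: "cnb_walk n m k w" "chi1 w = c1" "chi2 w = c2" "f1 w = g1" "f2 w = g2"
    by blast
  have "0 \<le> c1 + int c2"
    using chi1_plus_chi2_nonneg[OF w(1)] w by simp
  define c where "c = nat (c1 + int c2 + 1)"
  have "3 * (c1 + int c2) + 2 = int (c + (c - 1) + c)"
    "int k - c1 - int g1 = int (nat (int k - c1 - int g1))"
    "int k - int c2 - int g2 = int (nat (int k - int c2 - int g2))"
    using \<open>0 \<le> c1 + int c2\<close> card_kinds(4,5)[OF w(1)] w by (simp_all add: c_def)
  then have powers:
    "(2 * real k) powi (3 * (c1 + int c2) + 2) = (2 * real k) ^ (c + (c - 1) + c)"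
    "real n powi (int k - c1 - int g1) = real n ^ nat (int k - c1 - int g1)"
    "real m powi (int k - int c2 - int g2) = real m ^ nat (int k - int c2 - int g2)"
    by (metis power_int_of_nat)+
  have "real (card ?S) \<le> real ((2 * k) ^ c * (2 * k) ^ (c - 1)
    * (n ^ nat (int k - c1 - int g1) * m ^ nat (int k - int c2 - int g2)
       * (2 * k) ^ c * (d2 - 1) ^ g1 * (d1 - 1) ^ g2))"
    unfolding of_nat_le_iff c_def by (rule card_walks_with_params_le_nat)
  also have "\<dots> = (2 * real k) ^ (c + (c - 1) + c) * real (d1 - 1) ^ g2 * real (d2 - 1) ^ g1
      * real n ^ nat (int k - c1 - int g1) * real m ^ nat (int k - int c2 - int g2)"
    by (simp only: power_add of_nat_mult of_nat_power of_nat_numeral mult_ac)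
  finally show ?thesis
    unfolding powers .
next
  case True
  show ?thesis unfolding True by simp
qed

theorem lemma2p14:
  fixes n m k d1 d2 :: nat
  shows "(\<forall>(c1::int) (c2::nat) (g1::nat) (g2::nat). c1 + int c2 \<ge> 1 \<longrightarrow>
           real (card {w. cnb_walk n m k w \<and> deg_bounded d1 d2 w \<and>
                          chi1 w = c1 \<and> chi2 w = c2 \<and> f1 w = g1 \<and> f2 w = g2})
           \<le> (2 * real k) powi (3 * (c1 + int c2) + 2) * real (d1 - 1) ^ g2 * real (d2 - 1) ^ g1
              * real n powi (int k - c1 - int g1) * real m powi (int k - int c2 - int g2))
       \<and> (\<forall>w. cnb_walk n m k w \<and> deg_bounded d1 d2 w \<longrightarrow>
              \<bar>int (f1 w) - int (f2 w)\<bar> \<le> chi1 w + int (chi2 w) + 1)"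
  using card_walks_with_params_le abs_f1_minus_f2_le by blast

end
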